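(* Let $0<r<\frac{C_0}{2}$ where $C_0=\frac14$. Then $1-|z|^2\simeq1-|w|^2$ whenever $z,w\in\mathbb{B}_n$ and $w\in D_\psi(z,r)$, with comparability constants independent of $z,w$.
   Context: $\mathbb{B}_n$ is the open unit ball of $\mathbb{C}^n$, $\langle z,w\rangle=\sum_jz_j\overline{w_j}$. For $z\ne0$, $P_z\zeta=\frac{\langle\zeta,z\rangle}{\langle z,z\rangle}z$, $P_0=0$, $Q_z=I-P_z$, and $D_\psi(z,r)=\{w\in\mathbb{B}_n:|z-P_zw|<r(1-|z|^2)^{3/2},\ |Q_zw|<r(1-|z|^2)\}$. $A\simeq B$ means $C^{-1}B\le A\le CB$ for a positive constant $C$. *)

theory Defs
  imports "HOL-Analysis.Analysis"
begin

definition cinner :: "complex^'n \<Rightarrow> complex^'n \<Rightarrow> complex" where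
  "cinner z w = (\<Sum>j\<in>UNIV. z $ j * cnj (w $ j))"

definition unit_ball :: "(complex^'n) set" where
  "unit_ball = {z. norm z < 1}"

definition Pz :: "complex^'n \<Rightarrow> complex^'n \<Rightarrow> complex^'n" where
  "Pz z \<zeta> = (if z = 0 then 0 else (cinner \<zeta> z / cinner z z) *s z)"

definition Qz :: "complex^'n \<Rightarrow> complex^'n \<Rightarrow> complex^'n" where
  "Qz z \<zeta> = \<zeta> - Pz z \<zeta>"

definition D_psi :: "complex^'n \<Rightarrow> real \<Rightarrow> (complex^'n) set" where
  "D_psi z r = {w \<in> unit_ball. norm (z - Pz z w) < r * (1 - (norm z)\<^sup>2) powr (3/2)
                               \<and> norm (Qz z w) < r * (1 - (norm z)\<^sup>2)}"

end

theory Submission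
  imports Defs
begin

text \<open>Write \<open>d = 1 - |z|\<^sup>2\<close>. Since \<open>d \<le> 1\<close>, both defining conditions of \<open>D_psi z r\<close> give
  \<open>|z - w| < 2 r d\<close>. For points of the ball \<open>||w|\<^sup>2 - |z|\<^sup>2| \<le> 2 |z - w|\<close>, so \<open>1 - |w|\<^sup>2\<close> differs
  from \<open>d\<close> by less than \<open>4 r d < d/2\<close> and the two quantities agree up to the factor 2.\<close>

lemma abs_norm_power2_diff_le:
  fixes x y :: "'a::real_normed_vector"
  shows "\<bar>(norm x)\<^sup>2 - (norm y)\<^sup>2\<bar> \<le> (norm x + norm y) * norm (x - y)"
proof -
  have "(norm x)\<^sup>2 - (norm y)\<^sup>2 = (norm x + norm y) * (norm x - norm y)"
    by (simp add: power2_eq_square algebra_simps)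
  then have "\<bar>(norm x)\<^sup>2 - (norm y)\<^sup>2\<bar> = (norm x + norm y) * \<bar>norm x - norm y\<bar>"
    by (simp add: abs_mult)
  also have "\<dots> \<le> (norm x + norm y) * norm (x - y)"
    by (intro mult_left_mono norm_triangle_ineq3) simp
  finally show ?thesis .
qed

lemma norm_diff_less_D_psi:
  assumes "z \<in> unit_ball" and "w \<in> D_psi z r"
  shows "norm (z - w) < 2 * r * (1 - (norm z)\<^sup>2)"
proof -
  define d where "d = 1 - (norm z)\<^sup>2"
  have "0 < d" "d \<le> 1"
    using assms(1) by (auto simp: d_def unit_ball_def abs_square_less_1)
  have radial: "norm (z - Pz z w) < r * d powr (3/2)"
    and tangential: "norm (Qz z w) < r * d"
    using assms(2) by (auto simp: D_psi_def d_def)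
  have "0 < r * d powr (3/2)"
    using radial norm_ge_zero[of "z - Pz z w"] by linarith
  then have "0 < r"
    using \<open>0 < d\<close> by (simp add: zero_less_mult_iff)
  have "d powr (3/2) \<le> d powr 1"
    using \<open>0 < d\<close> \<open>d \<le> 1\<close> by (intro powr_mono') auto
  then have "r * d powr (3/2) \<le> r * d"
    using \<open>0 < d\<close> \<open>0 < r\<close> by (intro mult_left_mono) auto
  moreover have "norm (z - w) \<le> norm (z - Pz z w) + norm (Qz z w)"
    using norm_triangle_ineq4[of "z - Pz z w" "Qz z w"] by (simp add: Qz_def)
  ultimately show ?thesis
    using radial tangential by (simp add: d_def)
qed

theorem lemma2p4:
  fixes r :: real and C\<^sub>0 :: real
  assumes "C\<^sub>0 = 1/4" and "0 < r" and "r < C\<^sub>0 / 2"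
  shows "\<exists>C>0. \<forall>z w :: complex^'n. z \<in> unit_ball \<longrightarrow> w \<in> unit_ball \<longrightarrow> w \<in> D_psi z r \<longrightarrow>
            (1 - (norm w)\<^sup>2) / C \<le> 1 - (norm z)\<^sup>2 \<and> 1 - (norm z)\<^sup>2 \<le> C * (1 - (norm w)\<^sup>2)"
proof (intro exI[of _ 2] conjI allI impI)
  fix z w :: "complex^'n"
  assume z: "z \<in> unit_ball" and w: "w \<in> unit_ball" and D: "w \<in> D_psi z r"
  define d where "d = 1 - (norm z)\<^sup>2"
  have "0 < d"
    using z by (simp add: d_def unit_ball_def abs_square_less_1)
  have "norm z + norm w \<le> 2"
    using z w by (simp add: unit_ball_def)
  then have "(norm z + norm w) * norm (z - w) \<le> 2 * norm (z - w)"
    by (intro mult_right_mono) auto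
  then have "\<bar>(norm z)\<^sup>2 - (norm w)\<^sup>2\<bar> \<le> 2 * norm (z - w)"
    using abs_norm_power2_diff_le[of z w] by linarith
  also have "\<dots> < 4 * r * d"
    using norm_diff_less_D_psi[OF z D] by (simp add: d_def)
  also have "\<dots> \<le> d / 2"
    using assms \<open>0 < d\<close> by simp
  finally have close: "\<bar>(norm z)\<^sup>2 - (norm w)\<^sup>2\<bar> < d / 2" .
  show "(1 - (norm w)\<^sup>2) / 2 \<le> 1 - (norm z)\<^sup>2"
    using close \<open>0 < d\<close> unfolding d_def abs_less_iff by argo
  show "1 - (norm z)\<^sup>2 \<le> 2 * (1 - (norm w)\<^sup>2)"
    using close \<open>0 < d\<close> unfolding d_def abs_less_iff by argo
qed simp

end
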